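(* There exist a single-item, 2-bidder interdependent-values setting whose valuation profile is $c$-single-crossing for some constant $c\ge1$, and a signal profile $\mathbf s$, such that every auction that allocates the item to a highest-valued bidder and charges the winner $w$ at most $v_w(\mathbf b)$ (her value evaluated at the reported bid profile $\mathbf b$) admits no pure Nash equilibrium at $\mathbf s$ under the no-overbidding assumption.
   Context: Single-item interdependent-values setting: bidders $i\in\{1,\dots,n\}$ have private signals $s_i\in S_i\subseteq\mathbb R_{\ge0}$ (here $S_i$ are intervals); valuations $v_i:S_1\times\dots\times S_n\to\mathbb R_{\ge0}$ are publicly known, weakly increasing in every coordinate and strictly increasing in $s_i$. The profile is $c$-single-crossing ($c\ge1$) if for all bidders $i,i'$, all $\mathbf s$ and all $\delta\ge0$, $c\,(v_i(s_i+\delta,\mathbf s_{-i})-v_i(\mathbf s))\ge v_{i'}(s_i+\delta,\mathbf s_{-i})-v_{i'}(\mathbf s)$. An auction solicits bids (reported signals) $b_i\in S_i$, allocates the item to some bidder in $\arg\max_j v_j(\mathbf b)$ (ties arbitrary), charges the winner $w$ a payment $p_w(\mathbf b)$, and losing bidders pay nothing. Utility: $u_i(\mathbf b;\mathbf s)=x_i(\mathbf b)v_i(\mathbf s)-p_i(\mathbf b)$. A pure Nash equilibrium at $\mathbf s$ under no-overbidding is a bid profile $\mathbf b$ with $b_i\le s_i$ for all $i$ such that no bidder $i$ has a bid $b_i'\in S_i$ with $b_i'\le s_i$ and $u_i((b_i',\mathbf b_{-i});\mathbf s)>u_i(\mathbf b;\mathbf s)$. *)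

theory Defs
  imports "HOL-Analysis.Analysis" "HOL-Library.FuncSet"
begin

text \<open>Bidders are 0..n-1. A (signal or bid) profile is an extensional function in
  PiE {..<n} S, where S i is the signal space of bidder i.\<close>

definition profiles :: "nat \<Rightarrow> (nat \<Rightarrow> real set) \<Rightarrow> (nat \<Rightarrow> real) set" where
  "profiles n S = PiE {..<n} S"

definition valid_setting :: "nat \<Rightarrow> (nat \<Rightarrow> real set) \<Rightarrow> (nat \<Rightarrow> (nat \<Rightarrow> real) \<Rightarrow> real) \<Rightarrow> bool" where
  "valid_setting n S v \<longleftrightarrow>
     (\<forall>i<n. is_interval (S i) \<and> S i \<noteq> {} \<and> S i \<subseteq> {0..}) \<and>
     (\<forall>i<n. \<forall>s\<in>profiles n S. v i s \<ge> 0) \<and>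
     (\<forall>i<n. \<forall>j<n. \<forall>s\<in>profiles n S. \<forall>\<delta>\<ge>0. s j + \<delta> \<in> S j \<longrightarrow>
         v i s \<le> v i (s(j := s j + \<delta>))) \<and>
     (\<forall>i<n. \<forall>s\<in>profiles n S. \<forall>\<delta>>0. s i + \<delta> \<in> S i \<longrightarrow>
         v i s < v i (s(i := s i + \<delta>)))"

definition single_crossing :: "nat \<Rightarrow> (nat \<Rightarrow> real set) \<Rightarrow> (nat \<Rightarrow> (nat \<Rightarrow> real) \<Rightarrow> real) \<Rightarrow> real \<Rightarrow> bool" where
  "single_crossing n S v c \<longleftrightarrow>
     (\<forall>i<n. \<forall>i'<n. \<forall>s\<in>profiles n S. \<forall>\<delta>\<ge>0. s i + \<delta> \<in> S i \<longrightarrow>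
        c * (v i (s(i := s i + \<delta>)) - v i s) \<ge> v i' (s(i := s i + \<delta>)) - v i' s)"

text \<open>An auction: winner function w (deterministic; ties broken arbitrarily) and the
  winner's payment p. It allocates to a highest-valued bidder (values at the bids) and
  charges the winner at most her value at the bid profile. Losers pay nothing.\<close>

definition highest_value_auction :: "nat \<Rightarrow> (nat \<Rightarrow> real set) \<Rightarrow> (nat \<Rightarrow> (nat \<Rightarrow> real) \<Rightarrow> real)
     \<Rightarrow> ((nat \<Rightarrow> real) \<Rightarrow> nat) \<Rightarrow> ((nat \<Rightarrow> real) \<Rightarrow> real) \<Rightarrow> bool" where
  "highest_value_auction n S v w p \<longleftrightarrow>
     (\<forall>b\<in>profiles n S. w b < n \<and> (\<forall>j<n. v j b \<le> v (w b) b) \<and> p b \<le> v (w b) b)"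

definition utility :: "(nat \<Rightarrow> (nat \<Rightarrow> real) \<Rightarrow> real) \<Rightarrow> ((nat \<Rightarrow> real) \<Rightarrow> nat) \<Rightarrow> ((nat \<Rightarrow> real) \<Rightarrow> real)
     \<Rightarrow> nat \<Rightarrow> (nat \<Rightarrow> real) \<Rightarrow> (nat \<Rightarrow> real) \<Rightarrow> real" where
  "utility v w p i b s = (if w b = i then v i s - p b else 0)"

definition pure_NE_no_overbid :: "nat \<Rightarrow> (nat \<Rightarrow> real set) \<Rightarrow> (nat \<Rightarrow> (nat \<Rightarrow> real) \<Rightarrow> real)
     \<Rightarrow> ((nat \<Rightarrow> real) \<Rightarrow> nat) \<Rightarrow> ((nat \<Rightarrow> real) \<Rightarrow> real) \<Rightarrow> (nat \<Rightarrow> real) \<Rightarrow> (nat \<Rightarrow> real) \<Rightarrow> bool" where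
  "pure_NE_no_overbid n S v w p s b \<longleftrightarrow>
     b \<in> profiles n S \<and> (\<forall>i<n. b i \<le> s i) \<and>
     (\<forall>i<n. \<forall>b'\<in>S i. b' \<le> s i \<longrightarrow> \<not> (utility v w p i (b(i := b')) s > utility v w p i b s))"

end

theory Submission
  imports Defs
begin

text \<open>All valuations in the example depend only on the total signal \<open>x = s\<^sub>0 + s\<^sub>1 \<in> [0, 2]\<close>:
  \<open>v\<^sub>0 = 9x(6 - x)\<close> and \<open>v\<^sub>1 = 36x + 8\<close>. Since \<open>v\<^sub>1 - v\<^sub>0 = (3x - 2)(3x - 4)\<close>, bidder 0 has the
  strictly highest value exactly for \<open>x \<in> (2/3, 4/3)\<close>, and bidder 1 outside \<open>[2/3, 4/3]\<close>.
  At the true signals \<open>(1, 1)\<close> the loser of any no-overbidding bid profile can move the reported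
  total into her own winning region while keeping it below 2, with her own signal in \<open>[0, 1]\<close>.
  She then wins and, as the payment is at most her value at the bids, which is below her true
  value, she gains strictly over the zero utility of losing. The increments of both
  valuations in \<open>x\<close> lie between 18 and 54 per unit, so the profile is 2-single-crossing.\<close>

lemma profiles_fun_upd:
  assumes "s \<in> profiles n S" "k < n" "y \<in> S k"
  shows "s(k := y) \<in> profiles n S"
  using PiE_fun_upd[OF assms(3,1)[unfolded profiles_def]] assms(2)
  by (simp add: profiles_def insert_absorb)

lemma utility_gain_by_winning:
  assumes auction: "highest_value_auction n S v w p"
    and b': "b' \<in> profiles n S" and "i < n" "w b \<noteq> i"
    and strict_top: "\<forall>j<n. j \<noteq> i \<longrightarrow> v j b' < v i b'"
    and below_true_value: "v i b' < v i s"
  shows "utility v w p i b s < utility v w p i b' s"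
proof -
  have "w b' < n" "v i b' \<le> v (w b') b'" "p b' \<le> v (w b') b'"
    using auction b' \<open>i < n\<close> unfolding highest_value_auction_def by auto
  then have "w b' = i"
    using strict_top by force
  then show ?thesis
    using \<open>p b' \<le> v (w b') b'\<close> below_true_value \<open>w b \<noteq> i\<close> by (simp add: utility_def)
qed

lemma no_NE_if_loser_can_win:
  assumes NE: "pure_NE_no_overbid n S v w p s b"
    and auction: "highest_value_auction n S v w p"
    and "i < n" "w b \<noteq> i" "y \<in> S i" "y \<le> s i"
    and "\<forall>j<n. j \<noteq> i \<longrightarrow> v j (b(i := y)) < v i (b(i := y))"
    and "v i (b(i := y)) < v i s"
  shows False
proof -
  have "b(i := y) \<in> profiles n S"
    using NE \<open>i < n\<close> \<open>y \<in> S i\<close> by (simp add: pure_NE_no_overbid_def profiles_fun_upd)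
  then have "utility v w p i b s < utility v w p i (b(i := y)) s"
    using assms(2-) by (intro utility_gain_by_winning) auto
  then show False
    using NE \<open>i < n\<close> \<open>y \<in> S i\<close> \<open>y \<le> s i\<close> unfolding pure_NE_no_overbid_def by blast
qed

definition unit_signals :: "nat \<Rightarrow> real set" where
  "unit_signals i = {0..1}"

definition total_signal_valuation :: "nat \<Rightarrow> (nat \<Rightarrow> real \<Rightarrow> real) \<Rightarrow> nat \<Rightarrow> (nat \<Rightarrow> real) \<Rightarrow> real" where
  "total_signal_valuation n g i s = g i (\<Sum>j<n. s j)"

lemma sum_fun_upd_add:
  fixes s :: "'a \<Rightarrow> 'b::comm_monoid_add"
  assumes "finite A" "k \<in> A"
  shows "sum (s(k := s k + \<delta>)) A = sum s A + \<delta>"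
proof -
  have "sum (s(k := s k + \<delta>)) A = (s k + \<delta>) + sum s (A - {k})"
    using assms by (simp add: sum.remove[of A k])
  also have "\<dots> = sum s A + \<delta>"
    using assms by (simp add: sum.remove[of A k] ac_simps)
  finally show ?thesis .
qed

lemma profiles_unit_signalsD:
  "s \<in> profiles n unit_signals \<Longrightarrow> j < n \<Longrightarrow> s j \<in> {0..1}"
  by (simp add: profiles_def unit_signals_def PiE_iff)

lemma total_signal_bounds:
  assumes "s \<in> profiles n unit_signals"
  shows "0 \<le> (\<Sum>j<n. s j)" "(\<Sum>j<n. s j) \<le> real n"
proof -
  have "\<And>j. j < n \<Longrightarrow> s j \<in> {0..1}"
    using assms by (rule profiles_unit_signalsD)
  then show "0 \<le> (\<Sum>j<n. s j)" "(\<Sum>j<n. s j) \<le> real n"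
    using sum_mono[of "{..<n}" s "\<lambda>_. 1"] by (auto intro: sum_nonneg)
qed

lemma total_signal_increment:
  assumes "s \<in> profiles n unit_signals" "k < n" "s k + \<delta> \<in> unit_signals k"
  shows "(\<Sum>j<n. (s(k := s k + \<delta>)) j) = (\<Sum>j<n. s j) + \<delta>"
    and "(\<Sum>j<n. s j) + \<delta> \<le> real n"
  using total_signal_bounds(2)[OF profiles_fun_upd[OF assms]] sum_fun_upd_add[of "{..<n}" k s \<delta>] assms(2)
  by simp_all

lemma valid_setting_total_signal_valuation:
  assumes nonneg: "\<forall>i<n. \<forall>x\<in>{0..real n}. 0 \<le> g i x"
    and increasing: "\<forall>i<n. strict_mono_on {0..real n} (g i)"
  shows "valid_setting n unit_signals (total_signal_valuation n g)"
  unfolding valid_setting_def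
proof (intro conjI allI impI ballI)
  fix i assume "i < n"
  show "is_interval (unit_signals i)" "unit_signals i \<noteq> {}" "unit_signals i \<subseteq> {0..}"
    by (auto simp: unit_signals_def is_interval_cc)
next
  fix i s assume "i < n" "s \<in> profiles n unit_signals"
  then show "0 \<le> total_signal_valuation n g i s"
    using nonneg total_signal_bounds by (simp add: total_signal_valuation_def)
next
  fix i j s and \<delta> :: real
  assume "i < n" "j < n" "s \<in> profiles n unit_signals" "0 \<le> \<delta>" "s j + \<delta> \<in> unit_signals j"
  moreover note total_signal_bounds(1)[of s n] total_signal_increment[of s n j \<delta>]
  ultimately show "total_signal_valuation n g i s \<le> total_signal_valuation n g i (s(j := s j + \<delta>))"
    unfolding total_signal_valuation_def
    by (simp add: strict_mono_on_leD[OF increasing[rule_format, OF \<open>i < n\<close>]])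
next
  fix i s and \<delta> :: real
  assume "i < n" "s \<in> profiles n unit_signals" "0 < \<delta>" "s i + \<delta> \<in> unit_signals i"
  moreover note total_signal_bounds(1)[of s n] total_signal_increment[of s n i \<delta>]
  ultimately show "total_signal_valuation n g i s < total_signal_valuation n g i (s(i := s i + \<delta>))"
    unfolding total_signal_valuation_def
    by (simp add: strict_mono_onD[OF increasing[rule_format, OF \<open>i < n\<close>]])
qed

lemma single_crossing_total_signal_valuation:
  assumes "\<forall>i<n. \<forall>i'<n. \<forall>x y. 0 \<le> x \<longrightarrow> x \<le> y \<longrightarrow> y \<le> real n \<longrightarrow>
             g i' y - g i' x \<le> c * (g i y - g i x)"
  shows "single_crossing n unit_signals (total_signal_valuation n g) c"
  unfolding single_crossing_def
proof (intro allI impI ballI)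
  fix i i' s and \<delta> :: real
  assume "i < n" "i' < n" "s \<in> profiles n unit_signals" "0 \<le> \<delta>" "s i + \<delta> \<in> unit_signals i"
  then show "total_signal_valuation n g i' (s(i := s i + \<delta>)) - total_signal_valuation n g i' s
      \<le> c * (total_signal_valuation n g i (s(i := s i + \<delta>)) - total_signal_valuation n g i s)"
    using assms total_signal_bounds(1)[of s n] total_signal_increment[of s n i \<delta>]
    by (simp add: total_signal_valuation_def)
qed

definition example_value :: "nat \<Rightarrow> real \<Rightarrow> real" where
  "example_value i x = (if i = 0 then 9 * x * (6 - x) else 36 * x + 8)"

lemma example_value_increment_bounds:
  fixes x y :: real
  assumes "0 \<le> x" "x \<le> y" "y \<le> 2"
  shows "18 * (y - x) \<le> example_value 0 y - example_value 0 x"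
    and "example_value 0 y - example_value 0 x \<le> 54 * (y - x)"
    and "example_value 1 y - example_value 1 x = 36 * (y - x)"
proof -
  have diff: "example_value 0 y - example_value 0 x = 9 * (y - x) * (6 - x - y)"
    by (simp add: example_value_def algebra_simps)
  have "9 * (y - x) * 2 \<le> 9 * (y - x) * (6 - x - y)" "9 * (y - x) * (6 - x - y) \<le> 9 * (y - x) * 6"
    using assms by (intro mult_left_mono; simp)+
  then show "18 * (y - x) \<le> example_value 0 y - example_value 0 x"
    and "example_value 0 y - example_value 0 x \<le> 54 * (y - x)"
    unfolding diff by simp_all
  show "example_value 1 y - example_value 1 x = 36 * (y - x)"
    by (simp add: example_value_def algebra_simps)
qed

lemma example_valid_setting: "valid_setting 2 unit_signals (total_signal_valuation 2 example_value)"
proof (rule valid_setting_total_signal_valuation)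
  show "\<forall>i<2. \<forall>x\<in>{0..real 2}. 0 \<le> example_value i x"
    by (auto simp: example_value_def)
  have "strict_mono_on {0..2} (example_value i)" for i
  proof (rule strict_mono_onI)
    fix x y :: real assume "x \<in> {0..2}" "y \<in> {0..2}" "x < y"
    then show "example_value i x < example_value i y"
      using example_value_increment_bounds[of x y] by (cases "i = 0") (auto simp: example_value_def)
  qed
  then show "\<forall>i<2. strict_mono_on {0..real 2} (example_value i)"
    by simp
qed

lemma example_single_crossing: "single_crossing 2 unit_signals (total_signal_valuation 2 example_value) 2"
proof (rule single_crossing_total_signal_valuation, intro allI impI)
  fix i i' :: nat and x y :: real
  assume "i < 2" "i' < 2" "0 \<le> x" "x \<le> y" "y \<le> real 2"
  then show "example_value i' y - example_value i' x \<le> 2 * (example_value i y - example_value i x)"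
    using example_value_increment_bounds[of x y] by (auto simp: less_2_cases_iff)
qed

lemma example_value_gap: "example_value 1 x - example_value 0 x = (3 * x - 2) * (3 * x - 4)"
  by (simp add: example_value_def algebra_simps)

lemma example_bidder1_winning_reply:
  assumes "0 \<le> t" "t \<le> 1"
  shows "\<exists>y\<in>{0..1}. example_value 0 (t + y) < example_value 1 (t + y)
                    \<and> example_value 1 (t + y) < example_value 1 2"
proof -
  define y :: real where "y = (if t < 2/3 then 0 else 5/6)"
  have "0 < (3 * (t + y) - 2) * (3 * (t + y) - 4)"
  proof (cases "t < 2/3")
    case True
    then show ?thesis
      using assms by (intro mult_neg_neg) (simp_all add: y_def)
  next
    case False
    then show ?thesis
      by (intro mult_pos_pos) (simp_all add: y_def)
  qed
  moreover have "t + y < 2"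
    using assms by (simp add: y_def)
  ultimately show ?thesis
    using example_value_gap[of "t + y"] by (intro bexI[of _ y]) (auto simp: y_def example_value_def)
qed

lemma example_bidder0_winning_reply:
  assumes "0 \<le> t" "t \<le> 1"
  shows "\<exists>y\<in>{0..1}. example_value 1 (y + t) < example_value 0 (y + t)
                    \<and> example_value 0 (y + t) < example_value 0 2"
proof -
  define y :: real where "y = 3/4 - t/2"
  have "(3 * (y + t) - 2) * (3 * (y + t) - 4) < 0"
    using assms by (intro mult_pos_neg) (simp_all add: y_def)
  moreover have "example_value 0 2 - example_value 0 (y + t) = 9 * (2 - (y + t)) * (4 - (y + t))"
    by (simp add: example_value_def algebra_simps)
  moreover have "0 < 9 * (2 - (y + t)) * (4 - (y + t))"
    using assms by (simp add: y_def)
  moreover have "y \<in> {0..1}"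
    using assms by (simp add: y_def)
  ultimately show ?thesis
    using example_value_gap[of "y + t"] by (intro bexI[of _ y]) auto
qed

abbreviation example_valuation :: "nat \<Rightarrow> (nat \<Rightarrow> real) \<Rightarrow> real" where
  "example_valuation \<equiv> total_signal_valuation 2 example_value"

abbreviation true_signals :: "nat \<Rightarrow> real" where
  "true_signals \<equiv> restrict (\<lambda>_. 1) {..<2}"

lemma total_signal_valuation_two_fun_upd:
  "total_signal_valuation 2 g i (b(0 := y)) = g i (y + b 1)"
  "total_signal_valuation 2 g i (b(1 := y)) = g i (b 0 + y)"
  by (simp_all add: total_signal_valuation_def numeral_2_eq_2)

lemma example_winning_reply:
  assumes b: "b \<in> profiles 2 unit_signals" and "i < 2"
  obtains y where "y \<in> unit_signals i" "y \<le> true_signals i"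
    "\<forall>j<2. j \<noteq> i \<longrightarrow> example_valuation j (b(i := y)) < example_valuation i (b(i := y))"
    "example_valuation i (b(i := y)) < example_valuation i true_signals"
proof -
  from b have "b 0 \<in> {0..1}" "b 1 \<in> {0..1}"
    by (simp_all only: profiles_unit_signalsD)
  have true_value: "example_valuation j true_signals = example_value j 2" for j
    by (simp add: total_signal_valuation_def numeral_2_eq_2)
  consider "i = 0" | "i = 1"
    using \<open>i < 2\<close> by linarith
  then show thesis
  proof cases
    case 1
    obtain y where "y \<in> {0..1}"
      "example_value 1 (y + b 1) < example_value 0 (y + b 1)" "example_value 0 (y + b 1) < example_value 0 2"
      using example_bidder0_winning_reply[of "b 1"] \<open>b 1 \<in> {0..1}\<close> by auto
    moreover from this have "example_valuation 1 (b(0 := y)) < example_valuation 0 (b(0 := y))"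
      "example_valuation 0 (b(0 := y)) < example_valuation 0 true_signals"
      unfolding total_signal_valuation_two_fun_upd true_value by simp_all
    ultimately show thesis
      using that[of y] 1 by (simp add: unit_signals_def less_2_cases_iff)
  next
    case 2
    obtain y where "y \<in> {0..1}"
      "example_value 0 (b 0 + y) < example_value 1 (b 0 + y)" "example_value 1 (b 0 + y) < example_value 1 2"
      using example_bidder1_winning_reply[of "b 0"] \<open>b 0 \<in> {0..1}\<close> by auto
    moreover from this have "example_valuation 0 (b(1 := y)) < example_valuation 1 (b(1 := y))"
      "example_valuation 1 (b(1 := y)) < example_valuation 1 true_signals"
      unfolding total_signal_valuation_two_fun_upd true_value by simp_all
    ultimately show thesis
      using that[of y] 2 by (simp add: unit_signals_def less_2_cases_iff)
  qed
qed

theorem mainTheorem3: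
  shows "\<exists>(S :: nat \<Rightarrow> real set) (v :: nat \<Rightarrow> (nat \<Rightarrow> real) \<Rightarrow> real) (c :: real) (s :: nat \<Rightarrow> real).
           valid_setting 2 S v \<and> c \<ge> 1 \<and> single_crossing 2 S v c \<and> s \<in> profiles 2 S \<and>
           (\<forall>w p. highest_value_auction 2 S v w p \<longrightarrow> \<not> (\<exists>b. pure_NE_no_overbid 2 S v w p s b))"
proof (intro exI conjI allI impI notI)
  show "valid_setting 2 unit_signals example_valuation" "single_crossing 2 unit_signals example_valuation 2"
    "(1::real) \<le> 2"
    by (simp_all add: example_valid_setting example_single_crossing)
  show "true_signals \<in> profiles 2 unit_signals"
    unfolding profiles_def by (simp add: restrict_PiE_iff unit_signals_def)
  fix w p
  assume auction: "highest_value_auction 2 unit_signals example_valuation w p"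
    and "\<exists>b. pure_NE_no_overbid 2 unit_signals example_valuation w p true_signals b"
  then obtain b where NE: "pure_NE_no_overbid 2 unit_signals example_valuation w p true_signals b"
    by blast
  then have b: "b \<in> profiles 2 unit_signals"
    unfolding pure_NE_no_overbid_def by blast
  then have "w b < 2"
    using auction unfolding highest_value_auction_def by blast
  define i where "i = 1 - w b"
  have "i < 2" "w b \<noteq> i"
    using \<open>w b < 2\<close> unfolding i_def by arith+
  show False
    using example_winning_reply[OF b \<open>i < 2\<close>] no_NE_if_loser_can_win[OF NE auction \<open>i < 2\<close> \<open>w b \<noteq> i\<close>]
    by blast
qed

end
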